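(* Let $(A,\succ,\prec)$ be an anti-pre-Novikov algebra and $\omega$ a non-degenerate bilinear form on $A$. Let $\omega^\sharp:A\to A^*$ be given by $\langle\omega^\sharp(x),y\rangle=\omega(x,y)$ and let $s_\omega\in A\otimes A$ be the element with $T_{s_\omega}=(\omega^\sharp)^{-1}$. Then $(A,\succ,\prec,\omega)$ is a quadratic anti-pre-Novikov algebra if and only if $s_\omega$ is symmetric and invariant.
   Context: $A$ is finite-dimensional over a field $k$. An anti-pre-Novikov algebra is $(A,\succ,\prec)$ such that with $x\circ y=x\succ y+x\prec y$: $(x\circ y-y\circ x)\succ z=y\succ(x\succ z)-x\succ(y\succ z)$; $x\prec(y\circ z)=(y\succ x)\prec z-(x\prec y)\prec z-y\succ(x\prec z)$; $(x\circ y)\succ z=-(x\succ z)\prec y$; $(x\prec y)\prec z=(x\prec z)\prec y$; $(x\circ y-y\circ x)\prec z=x\succ(y\circ z)-y\succ(x\circ z)$. It is quadratic with respect to $\omega$ if $\omega$ is non-degenerate, symmetric, and $\omega(x\prec y,z)=-\omega(x,z\circ y)$, $\omega(x\succ y,z)=\omega(x\circ z+z\circ x,y)$ for all $x,y,z$. For $r\in A\otimes A$, $T_r:A^*\to A$ is $\langle T_r(\zeta),\eta\rangle=\langle r,\zeta\otimes\eta\rangle$; $r$ is symmetric if $\tau(r)=r$ ($\tau$ the flip). With $L_\ast(x)y=x\ast y$, $R_\ast(x)y=y\ast x$, $x\odot y=x\succ y+y\prec x$, $L_{\star}=L_{\circ}+R_{\circ}$, $L_{\odot}=L_{\succ}+R_{\prec}$: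 $r$ is invariant if $(I\otimes L_{\star}(x)-L_{\succ}(x)\otimes I)r=0$ and $(L_{\circ}(x)\otimes I-I\otimes L_{\odot}(x))r=0$ for all $x\in A$. *)

theory Defs
  imports Main
begin

text \<open>Coordinatisation: the finite-dimensional vector space A over the field 'k is
  modelled as 'n \<Rightarrow> 'k for a finite index type 'n (a basis of A).
  The dual space A* is modelled as 'n \<Rightarrow> 'k via the dual basis, and
  A \<otimes> A as coefficient arrays 'n \<Rightarrow> 'n \<Rightarrow> 'k (r = sum r i j e_i \<otimes> e_j).\<close>

type_synonym ('k, 'n) vect = "'n \<Rightarrow> 'k"

definition vadd :: "('k::field, 'n) vect \<Rightarrow> ('k, 'n) vect \<Rightarrow> ('k, 'n) vect" where
  "vadd x y = (\<lambda>i. x i + y i)"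
definition vsub :: "('k::field, 'n) vect \<Rightarrow> ('k, 'n) vect \<Rightarrow> ('k, 'n) vect" where
  "vsub x y = (\<lambda>i. x i - y i)"
definition vneg :: "('k::field, 'n) vect \<Rightarrow> ('k, 'n) vect" where
  "vneg x = (\<lambda>i. - x i)"
definition vsmul :: "'k::field \<Rightarrow> ('k, 'n) vect \<Rightarrow> ('k, 'n) vect" where
  "vsmul a x = (\<lambda>i. a * x i)"
definition vzero :: "('k::field, 'n) vect" where
  "vzero = (\<lambda>i. 0)"
definition basis_vec :: "'n \<Rightarrow> ('k::field, 'n) vect" where
  "basis_vec j = (\<lambda>i. if i = j then 1 else 0)"

definition bilinear_op :: "(('k::field, 'n) vect \<Rightarrow> ('k, 'n) vect \<Rightarrow> ('k, 'n) vect) \<Rightarrow> bool" where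
  "bilinear_op m \<longleftrightarrow>
     (\<forall>x y z. m (vadd x y) z = vadd (m x z) (m y z)) \<and>
     (\<forall>x y z. m x (vadd y z) = vadd (m x y) (m x z)) \<and>
     (\<forall>a x y. m (vsmul a x) y = vsmul a (m x y)) \<and>
     (\<forall>a x y. m x (vsmul a y) = vsmul a (m x y))"

definition bilinear_form :: "(('k::field, 'n) vect \<Rightarrow> ('k, 'n) vect \<Rightarrow> 'k) \<Rightarrow> bool" where
  "bilinear_form w \<longleftrightarrow>
     (\<forall>x y z. w (vadd x y) z = w x z + w y z) \<and>
     (\<forall>x y z. w x (vadd y z) = w x y + w x z) \<and>
     (\<forall>a x y. w (vsmul a x) y = a * w x y) \<and>
     (\<forall>a x y. w x (vsmul a y) = a * w x y)"

definition nondegenerate :: "(('k::field, 'n) vect \<Rightarrow> ('k, 'n) vect \<Rightarrow> 'k) \<Rightarrow> bool" where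
  "nondegenerate w \<longleftrightarrow> (\<forall>x. (\<forall>y. w x y = 0) \<longrightarrow> x = vzero)"

definition symmetric_form :: "(('k::field, 'n) vect \<Rightarrow> ('k, 'n) vect \<Rightarrow> 'k) \<Rightarrow> bool" where
  "symmetric_form w \<longleftrightarrow> (\<forall>x y. w x y = w y x)"

definition circ_op where
  "circ_op succ prec x y = vadd (succ x y) (prec x y)"

definition anti_pre_Novikov ::
  "(('k::field, 'n) vect \<Rightarrow> ('k, 'n) vect \<Rightarrow> ('k, 'n) vect) \<Rightarrow>
   (('k, 'n) vect \<Rightarrow> ('k, 'n) vect \<Rightarrow> ('k, 'n) vect) \<Rightarrow> bool" where
  "anti_pre_Novikov succ prec \<longleftrightarrow>
     bilinear_op succ \<and> bilinear_op prec \<and>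
     (let cc = circ_op succ prec in
     (\<forall>x y z. succ (vsub (cc x y) (cc y x)) z = vsub (succ y (succ x z)) (succ x (succ y z))) \<and>
     (\<forall>x y z. prec x (cc y z) =
               vsub (vsub (prec (succ y x) z) (prec (prec x y) z)) (succ y (prec x z))) \<and>
     (\<forall>x y z. succ (cc x y) z = vneg (prec (succ x z) y)) \<and>
     (\<forall>x y z. prec (prec x y) z = prec (prec x z) y) \<and>
     (\<forall>x y z. prec (vsub (cc x y) (cc y x)) z = vsub (succ x (cc y z)) (succ y (cc x z))))"

definition quadratic_apN where
  "quadratic_apN succ prec w \<longleftrightarrow>
     anti_pre_Novikov succ prec \<and> nondegenerate w \<and> symmetric_form w \<and>
     (\<forall>x y z. w (prec x y) z = - w x (circ_op succ prec z y)) \<and>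
     (\<forall>x y z. w (succ x y) z = w (vadd (circ_op succ prec x z) (circ_op succ prec z x)) y)"

definition pairing :: "('k::field, 'n::finite) vect \<Rightarrow> ('k, 'n) vect \<Rightarrow> 'k" where
  "pairing \<zeta> x = (\<Sum>i\<in>UNIV. \<zeta> i * x i)"

text \<open>T_r : A* \<rightarrow> A, with \<langle>T_r \<zeta>, \<eta>\<rangle> = \<langle>r, \<zeta> \<otimes> \<eta>\<rangle> = sum r i j \<zeta> i \<eta> j.\<close>
definition T_map :: "('n::finite \<Rightarrow> 'n \<Rightarrow> 'k::field) \<Rightarrow> ('k, 'n) vect \<Rightarrow> ('k, 'n) vect" where
  "T_map r \<zeta> = (\<lambda>j. \<Sum>i\<in>UNIV. \<zeta> i * r i j)"

definition omega_sharp :: "(('k::field, 'n::finite) vect \<Rightarrow> ('k, 'n) vect \<Rightarrow> 'k) \<Rightarrow> ('k, 'n) vect \<Rightarrow> ('k, 'n) vect" where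
  "omega_sharp w x = (\<lambda>j. w x (basis_vec j))"

definition symmetric_tensor :: "('n \<Rightarrow> 'n \<Rightarrow> 'k) \<Rightarrow> bool" where
  "symmetric_tensor r \<longleftrightarrow> (\<forall>i j. r i j = r j i)"

definition tensor_map ::
  "(('k::field, 'n::finite) vect \<Rightarrow> ('k, 'n) vect) \<Rightarrow> (('k, 'n) vect \<Rightarrow> ('k, 'n) vect) \<Rightarrow>
   ('n \<Rightarrow> 'n \<Rightarrow> 'k) \<Rightarrow> ('n \<Rightarrow> 'n \<Rightarrow> 'k)" where
  "tensor_map f g r = (\<lambda>a b. \<Sum>i\<in>UNIV. \<Sum>j\<in>UNIV. r i j * f (basis_vec i) a * g (basis_vec j) b)"

definition invariant_tensor where
  "invariant_tensor succ prec r \<longleftrightarrow>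
     (\<forall>x. tensor_map id (\<lambda>y. vadd (circ_op succ prec x y) (circ_op succ prec y x)) r
          = tensor_map (\<lambda>y. succ x y) id r) \<and>
     (\<forall>x. tensor_map (\<lambda>y. circ_op succ prec x y) id r
          = tensor_map id (\<lambda>y. vadd (succ x y) (prec y x)) r)"

end

theory Submission
  imports Defs
begin

(* The columns s a = T_s(e_a) of s form the basis of A that is \<omega>-dual to the coordinate basis,
   \<omega>(s a, y) = y a, so linear functionals are determined by their values on them.  Reading both
   sides of (f \<otimes> id) s = (id \<otimes> g) s against this dual basis turns each invariance condition into
   the adjointness \<omega>(u, f v) = \<omega>(g u, v); for f = L_\<succ>(x), g = L_\<star>(x) this is the second
   quadratic identity, and for f = L_\<circ>(x), g = L_\<odot>(x) it is, modulo the second one, the first. *)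

definition linear_map :: "(('k::field, 'n) vect \<Rightarrow> ('k, 'm) vect) \<Rightarrow> bool" where
  "linear_map f \<longleftrightarrow>
     (\<forall>x y. f (vadd x y) = vadd (f x) (f y)) \<and> (\<forall>a x. f (vsmul a x) = vsmul a (f x))"

definition linear_functional :: "(('k::field, 'n) vect \<Rightarrow> 'k) \<Rightarrow> bool" where
  "linear_functional f \<longleftrightarrow>
     (\<forall>x y. f (vadd x y) = f x + f y) \<and> (\<forall>a x. f (vsmul a x) = a * f x)"

lemma linear_functional_sum:
  assumes "linear_functional f" and "finite A"
  shows "f (\<lambda>k. \<Sum>i\<in>A. c i * v i k) = (\<Sum>i\<in>A. c i * f (v i))"
  using assms(2)
proof (induction A rule: finite_induct)
  case empty
  have "f (\<lambda>k. 0) = f (vsmul 0 (\<lambda>k. 0))" by (simp add: vsmul_def)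
  also have "\<dots> = 0" using assms(1) by (simp add: linear_functional_def)
  finally show ?case by simp
next
  case (insert i A)
  then have "(\<lambda>k. \<Sum>j\<in>insert i A. c j * v j k) = vadd (vsmul (c i) (v i)) (\<lambda>k. \<Sum>j\<in>A. c j * v j k)"
    by (simp add: vadd_def vsmul_def)
  with insert assms(1) show ?case by (simp add: linear_functional_def)
qed

lemma linear_functional_coordinate: "linear_functional (\<lambda>x. x a)"
  by (simp add: linear_functional_def vadd_def vsmul_def)

lemma linear_functional_comp:
  "linear_functional p \<Longrightarrow> linear_map f \<Longrightarrow> linear_functional (\<lambda>x. p (f x))"
  by (simp add: linear_functional_def linear_map_def)

lemma linear_map_coordinate: "linear_map f \<Longrightarrow> linear_functional (\<lambda>x. f x a)"
  using linear_functional_comp[OF linear_functional_coordinate] .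

lemma linear_map_vadd: "linear_map f \<Longrightarrow> linear_map g \<Longrightarrow> linear_map (\<lambda>x. vadd (f x) (g x))"
  by (simp add: linear_map_def vadd_def vsmul_def fun_eq_iff algebra_simps)

lemma bilinear_op_linear_left: "bilinear_op m \<Longrightarrow> linear_map (\<lambda>x. m x y)"
  by (simp add: bilinear_op_def linear_map_def)

lemma bilinear_op_linear_right: "bilinear_op m \<Longrightarrow> linear_map (m x)"
  by (simp add: bilinear_op_def linear_map_def)

lemma bilinear_form_linear_left: "bilinear_form w \<Longrightarrow> linear_functional (\<lambda>x. w x y)"
  by (simp add: bilinear_form_def linear_functional_def)

lemma bilinear_form_linear_right: "bilinear_form w \<Longrightarrow> linear_functional (w x)"
  by (simp add: bilinear_form_def linear_functional_def)

lemma vect_eq_sum_basis_vec: "(x :: ('k::field, 'n::finite) vect) = (\<lambda>k. \<Sum>i\<in>UNIV. x i * basis_vec i k)"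
  by (simp add: basis_vec_def if_distrib cong: if_cong)

lemma linear_functional_eq_sum_basis_vec:
  fixes f :: "('k::field, 'n::finite) vect \<Rightarrow> 'k"
  assumes "linear_functional f"
  shows "f x = (\<Sum>i\<in>UNIV. x i * f (basis_vec i))"
  by (subst vect_eq_sum_basis_vec) (rule linear_functional_sum[OF assms finite_UNIV])

lemma bilinear_form_eq_pairing:
  assumes "bilinear_form w"
  shows "w x y = pairing (omega_sharp w x) y"
  using linear_functional_eq_sum_basis_vec[OF bilinear_form_linear_right[OF assms], of x y]
  by (simp add: pairing_def omega_sharp_def mult.commute)

lemma T_map_basis_vec: "T_map r (basis_vec a) = r a"
  by (simp add: T_map_def basis_vec_def fun_eq_iff if_distrib if_distribR cong: if_cong)

lemma tensor_map_id_right: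
  assumes "linear_map f"
  shows "tensor_map f id r a b = f (\<lambda>i. r i b) a"
proof -
  have "tensor_map f id r a b = (\<Sum>i\<in>UNIV. r i b * f (basis_vec i) a)"
    by (simp add: tensor_map_def basis_vec_def if_distrib if_distribR cong: if_cong)
  also have "\<dots> = f (\<lambda>i. r i b) a"
    by (rule linear_functional_eq_sum_basis_vec[OF linear_map_coordinate[OF assms], symmetric])
  finally show ?thesis .
qed

lemma tensor_map_id_left:
  assumes "linear_map g"
  shows "tensor_map id g r a b = g (r a) b"
proof -
  have "tensor_map id g r a b = (\<Sum>j\<in>UNIV. r a j * g (basis_vec j) b)"
    by (simp add: tensor_map_def basis_vec_def if_distrib if_distribR sum.If_cases cong: if_cong)
  also have "\<dots> = g (r a) b"
    by (rule linear_functional_eq_sum_basis_vec[OF linear_map_coordinate[OF assms], symmetric])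
  finally show ?thesis .
qed

locale omega_inverse_tensor =
  fixes w :: "('k::field, 'n::finite) vect \<Rightarrow> ('k, 'n) vect \<Rightarrow> 'k"
    and s :: "'n \<Rightarrow> 'n \<Rightarrow> 'k"
  assumes bilinear: "bilinear_form w"
    and omega_sharp_T_map: "\<forall>\<zeta>. omega_sharp w (T_map s \<zeta>) = \<zeta>"
    and T_map_omega_sharp: "\<forall>x. T_map s (omega_sharp w x) = x"
begin

lemma dual_basis: "w (s a) y = y a"
proof -
  have "omega_sharp w (s a) = basis_vec a"
    using omega_sharp_T_map T_map_basis_vec by metis
  then show ?thesis
    by (simp add: bilinear_form_eq_pairing[OF bilinear] pairing_def basis_vec_def
        if_distrib if_distribR cong: if_cong)
qed

lemma linear_functional_eq_on_dual_basis:
  assumes "linear_functional p" and "linear_functional q" and "\<And>b. p (s b) = q (s b)"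
  shows "p v = q v"
proof -
  have v: "v = (\<lambda>k. \<Sum>i\<in>UNIV. omega_sharp w v i * s i k)"
    using T_map_omega_sharp unfolding T_map_def by metis
  have "p v = (\<Sum>i\<in>UNIV. omega_sharp w v i * p (s i))"
    by (subst v) (rule linear_functional_sum[OF assms(1) finite_UNIV])
  also have "\<dots> = (\<Sum>i\<in>UNIV. omega_sharp w v i * q (s i))"
    using assms(3) by simp
  also have "\<dots> = q v"
    by (subst (2) v) (rule linear_functional_sum[OF assms(2) finite_UNIV, symmetric])
  finally show ?thesis .
qed

lemma symmetric_form_iff_symmetric_tensor: "symmetric_form w \<longleftrightarrow> symmetric_tensor s"
proof
  assume "symmetric_form w"
  then show "symmetric_tensor s"
    using dual_basis unfolding symmetric_form_def symmetric_tensor_def by metis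
next
  assume "symmetric_tensor s"
  have on_dual_basis: "w u (s b) = w (s b) u" for u b
    by (rule linear_functional_eq_on_dual_basis[OF bilinear_form_linear_left[OF bilinear]
          bilinear_form_linear_right[OF bilinear]])
      (use \<open>symmetric_tensor s\<close> in \<open>simp add: dual_basis symmetric_tensor_def\<close>)
  show "symmetric_form w"
    unfolding symmetric_form_def
    by (intro allI, rule linear_functional_eq_on_dual_basis[OF bilinear_form_linear_right[OF bilinear]
          bilinear_form_linear_left[OF bilinear] on_dual_basis])
qed

lemma tensor_map_eq_iff_adjoint:
  assumes "symmetric_tensor s" and f: "linear_map f" and g: "linear_map g"
  shows "tensor_map f id s = tensor_map id g s \<longleftrightarrow> (\<forall>u v. w u (f v) = w (g u) v)"
proof -
  have w_sym: "w x y = w y x" for x y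
    using assms(1) symmetric_form_iff_symmetric_tensor by (simp add: symmetric_form_def)
  have "tensor_map f id s a b = w (s a) (f (s b))" for a b
  proof -
    have "(\<lambda>i. s i b) = s b"
      using assms(1) by (simp add: symmetric_tensor_def fun_eq_iff)
    then show ?thesis by (simp add: tensor_map_id_right[OF f] dual_basis)
  qed
  moreover have "tensor_map id g s a b = w (g (s a)) (s b)" for a b
    by (simp add: tensor_map_id_left[OF g] dual_basis w_sym[of "g (s a)"])
  ultimately have "tensor_map f id s = tensor_map id g s \<longleftrightarrow>
      (\<forall>a b. w (s a) (f (s b)) = w (g (s a)) (s b))"
    by (simp add: fun_eq_iff)
  also have "\<dots> \<longleftrightarrow> (\<forall>u v. w u (f v) = w (g u) v)"
  proof (intro iffI allI)
    fix u v
    assume on_dual_basis: "\<forall>a b. w (s a) (f (s b)) = w (g (s a)) (s b)"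
    have left_on_dual_basis: "w u (f (s b)) = w (g u) (s b)" for b
      by (rule linear_functional_eq_on_dual_basis[OF bilinear_form_linear_left[OF bilinear]
            linear_functional_comp[OF bilinear_form_linear_left[OF bilinear] g]])
        (use on_dual_basis in simp)
    show "w u (f v) = w (g u) v"
      by (rule linear_functional_eq_on_dual_basis[OF
            linear_functional_comp[OF bilinear_form_linear_right[OF bilinear] f]
            bilinear_form_linear_right[OF bilinear] left_on_dual_basis])
  qed simp
  finally show ?thesis .
qed

end

lemma quadratic_apN_iff_adjoint:
  assumes "anti_pre_Novikov succ prec" and bilinear: "bilinear_form w"
    and "nondegenerate w" and symmetric: "symmetric_form w"
  defines "cc \<equiv> circ_op succ prec"
  shows "quadratic_apN succ prec w \<longleftrightarrow>
    (\<forall>x u v. w u (succ x v) = w (vadd (cc x u) (cc u x)) v) \<and>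
    (\<forall>x u v. w u (cc x v) = w (vadd (succ x u) (prec u x)) v)"
proof -
  have w_sym: "w x y = w y x" for x y
    using symmetric by (simp add: symmetric_form_def)
  have w_vadd: "w (vadd x y) z = w x z + w y z" for x y z
    using bilinear by (simp add: bilinear_form_def)
  have "(\<forall>x y z. w (succ x y) z = w (vadd (cc x z) (cc z x)) y) \<longleftrightarrow>
      (\<forall>x u v. w u (succ x v) = w (vadd (cc x u) (cc u x)) v)"
    by (metis w_sym)
  moreover have "w u (cc x v) = w (vadd (succ x u) (prec u x)) v \<longleftrightarrow>
      w (prec u x) v = - w u (cc v x)"
    if "\<forall>x y z. w (succ x y) z = w (vadd (cc x z) (cc z x)) y" for x u v
  proof -
    have "w (vadd (succ x u) (prec u x)) v = w u (cc x v) + w u (cc v x) + w (prec u x) v"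
      using that by (simp add: w_vadd w_sym[of _ u])
    then show ?thesis
      by (simp add: add.assoc add_eq_0_iff)
  qed
  ultimately show ?thesis
    using assms(1,3) symmetric unfolding quadratic_apN_def cc_def by blast
qed

theorem mainTheorem14:
  fixes succ prec :: "('k::field, 'n::finite) vect \<Rightarrow> ('k, 'n) vect \<Rightarrow> ('k, 'n) vect"
    and w :: "('k, 'n) vect \<Rightarrow> ('k, 'n) vect \<Rightarrow> 'k"
    and s :: "'n \<Rightarrow> 'n \<Rightarrow> 'k"
  assumes "anti_pre_Novikov succ prec"
    and "bilinear_form w"
    and "nondegenerate w"
    and "\<forall>\<zeta>. omega_sharp w (T_map s \<zeta>) = \<zeta>"
    and "\<forall>x. T_map s (omega_sharp w x) = x"
  shows "quadratic_apN succ prec w \<longleftrightarrow> symmetric_tensor s \<and> invariant_tensor succ prec s"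
proof -
  interpret omega_inverse_tensor w s
    using assms(2,4,5) by unfold_locales
  have succ: "bilinear_op succ" and prec: "bilinear_op prec"
    using assms(1) by (simp_all add: anti_pre_Novikov_def)
  have circ: "linear_map (circ_op succ prec x)" "linear_map (\<lambda>y. circ_op succ prec y x)" for x
    unfolding circ_op_def
    by (intro linear_map_vadd bilinear_op_linear_left bilinear_op_linear_right succ prec)+
  have star: "linear_map (\<lambda>y. vadd (circ_op succ prec x y) (circ_op succ prec y x))"
    and odot: "linear_map (\<lambda>y. vadd (succ x y) (prec y x))" for x
    by (intro linear_map_vadd circ bilinear_op_linear_left bilinear_op_linear_right succ prec)+
  show ?thesis
  proof (cases "symmetric_form w")
    case True
    then have "symmetric_tensor s"
      using symmetric_form_iff_symmetric_tensor by blast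
    then show ?thesis
      unfolding invariant_tensor_def quadratic_apN_iff_adjoint[OF assms(1-3) True]
      by (simp only: eq_commute[of "tensor_map id g s" "tensor_map f id s" for f g]
          tensor_map_eq_iff_adjoint bilinear_op_linear_right succ circ star odot simp_thms)
  next
    case False
    then show ?thesis
      using symmetric_form_iff_symmetric_tensor by (simp add: quadratic_apN_def)
  qed
qed

end
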